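(* Let $G$ be a graph with minimum degree $\delta(G)\ge 2$. Then (1) $G$ has a $\gamma$-set $D$ such that every vertex in $D$ has at least two neighbors in $V_G-D$; and (2) $\gamma(G)=\gamma_{\rm cer}(G)$.
   Context: All graphs are finite and simple; $\delta(G)$ denotes the minimum degree of $G$. A set $D\subseteq V_G$ is a dominating set of $G$ if every vertex of $V_G-D$ has a neighbor in $D$; $\gamma(G)$ is the minimum cardinality of a dominating set, and a $\gamma$-set is a dominating set of cardinality $\gamma(G)$. A set $D\subseteq V_G$ is a certified dominating set of $G$ if $D$ is a dominating set of $G$ and every vertex of $D$ has either zero or at least two neighbors in $V_G-D$; $\gamma_{\rm cer}(G)$ is the minimum cardinality of a certified dominating set of $G$. *)

theory Defs
  imports Main
begin

definition graph :: "'a set \<Rightarrow> ('a \<Rightarrow> 'a \<Rightarrow> bool) \<Rightarrow> bool" where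
  "graph V E \<longleftrightarrow> finite V \<and> (\<forall>u v. E u v \<longrightarrow> u \<in> V \<and> v \<in> V)
     \<and> (\<forall>u v. E u v \<longrightarrow> E v u) \<and> (\<forall>v. \<not> E v v)"

definition neighbors :: "'a set \<Rightarrow> ('a \<Rightarrow> 'a \<Rightarrow> bool) \<Rightarrow> 'a \<Rightarrow> 'a set" where
  "neighbors V E v = {u \<in> V. E v u}"

definition degree :: "'a set \<Rightarrow> ('a \<Rightarrow> 'a \<Rightarrow> bool) \<Rightarrow> 'a \<Rightarrow> nat" where
  "degree V E v = card (neighbors V E v)"

definition min_degree :: "'a set \<Rightarrow> ('a \<Rightarrow> 'a \<Rightarrow> bool) \<Rightarrow> nat" where
  "min_degree V E = Min (degree V E ` V)"

definition dominating_set :: "'a set \<Rightarrow> ('a \<Rightarrow> 'a \<Rightarrow> bool) \<Rightarrow> 'a set \<Rightarrow> bool" where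
  "dominating_set V E D \<longleftrightarrow> D \<subseteq> V \<and> (\<forall>v \<in> V - D. \<exists>u \<in> D. E v u)"

definition domination_number :: "'a set \<Rightarrow> ('a \<Rightarrow> 'a \<Rightarrow> bool) \<Rightarrow> nat" where
  "domination_number V E = Min (card ` {D. dominating_set V E D})"

definition gamma_set :: "'a set \<Rightarrow> ('a \<Rightarrow> 'a \<Rightarrow> bool) \<Rightarrow> 'a set \<Rightarrow> bool" where
  "gamma_set V E D \<longleftrightarrow> dominating_set V E D \<and> card D = domination_number V E"

definition certified_dominating_set :: "'a set \<Rightarrow> ('a \<Rightarrow> 'a \<Rightarrow> bool) \<Rightarrow> 'a set \<Rightarrow> bool" where
  "certified_dominating_set V E D \<longleftrightarrow> dominating_set V E D \<and>
     (\<forall>v \<in> D. card (neighbors V E v - D) = 0 \<or> card (neighbors V E v - D) \<ge> 2)"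

definition certified_domination_number :: "'a set \<Rightarrow> ('a \<Rightarrow> 'a \<Rightarrow> bool) \<Rightarrow> nat" where
  "certified_domination_number V E = Min (card ` {D. certified_dominating_set V E D})"

end

theory Submission
  imports Defs
begin

text \<open>Among all \<gamma>-sets choose one, D, with the largest number of edges between D and V - D.
If some v \<in> D had at most one neighbour outside D, then (as \<delta> \<ge> 2) v has a neighbour in D.
Either D - {v} still dominates, contradicting minimality, or v has exactly one outside
neighbour u whose only neighbour in D is v; then exchanging v for u gives another \<gamma>-set
with strictly more cut edges. Such a D is certified, which forces \<gamma> = \<gamma>_cer.\<close>

lemma finite_dominating_sets:
  assumes "graph V E"
  shows "finite {D. dominating_set V E D}"
proof -
  have "{D. dominating_set V E D} \<subseteq> Pow V" by (auto simp: dominating_set_def)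
  then show ?thesis using assms by (auto simp: graph_def intro: finite_subset)
qed

lemma dominating_set_vertices: "dominating_set V E V"
  by (simp add: dominating_set_def)

lemma domination_number_le:
  assumes "graph V E" "dominating_set V E D"
  shows "domination_number V E \<le> card D"
  unfolding domination_number_def using finite_dominating_sets[OF assms(1)] assms(2) by auto

lemma gamma_set_exists:
  assumes "graph V E"
  shows "\<exists>D. gamma_set V E D"
proof -
  have "domination_number V E \<in> card ` {D. dominating_set V E D}"
    unfolding domination_number_def using finite_dominating_sets[OF assms] dominating_set_vertices
    by (intro Min_in) auto
  then show ?thesis unfolding gamma_set_def by auto
qed

lemma gamma_set_remove_not_dominating:
  assumes "graph V E" "gamma_set V E D" "v \<in> D"
  shows "\<not> dominating_set V E (D - {v})"
proof
  assume "dominating_set V E (D - {v})"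
  then have "domination_number V E \<le> card (D - {v})" by (rule domination_number_le[OF assms(1)])
  moreover have "finite D" using assms(1,2) finite_subset
    by (auto simp: gamma_set_def dominating_set_def graph_def)
  ultimately show False using assms(2,3) card_Diff1_less[of D v] by (simp add: gamma_set_def)
qed

lemma degree_ge_min_degree:
  assumes "graph V E" "v \<in> V"
  shows "min_degree V E \<le> card (neighbors V E v)"
  using assms by (auto simp: min_degree_def degree_def graph_def)

lemma neighbors_sym: "graph V E \<Longrightarrow> x \<in> V \<Longrightarrow> E x v \<Longrightarrow> x \<in> neighbors V E v"
  by (auto simp: graph_def neighbors_def)

lemma dominating_set_remove:
  assumes "graph V E" "dominating_set V E D" "w \<in> D - {v}" "E v w"
    and outside: "\<And>x. x \<in> neighbors V E v - D \<Longrightarrow> \<exists>z \<in> D - {v}. E x z"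
  shows "dominating_set V E (D - {v})"
  unfolding dominating_set_def
proof (intro conjI ballI)
  show "D - {v} \<subseteq> V" using assms(2) by (auto simp: dominating_set_def)
  fix x assume x: "x \<in> V - (D - {v})"
  show "\<exists>z \<in> D - {v}. E x z"
  proof (cases "x = v")
    case True then show ?thesis using assms(3,4) by auto
  next
    case False
    then have "x \<in> V - D" using x by auto
    then obtain y where "y \<in> D" "E x y" using assms(2) by (auto simp: dominating_set_def)
    then show ?thesis
      using outside neighbors_sym[OF assms(1)] \<open>x \<in> V - D\<close> by (cases "y = v") auto
  qed
qed

lemma dominating_set_exchange:
  assumes "graph V E" "dominating_set V E D" "w \<in> D - {v}" "E v w" "u \<in> V"
    and outside: "neighbors V E v - D \<subseteq> {u}"
  shows "dominating_set V E (insert u (D - {v}))"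
  unfolding dominating_set_def
proof (intro conjI ballI)
  show "insert u (D - {v}) \<subseteq> V" using assms(2,5) by (auto simp: dominating_set_def)
  fix x assume x: "x \<in> V - insert u (D - {v})"
  show "\<exists>z \<in> insert u (D - {v}). E x z"
  proof (cases "x = v")
    case True then show ?thesis using assms(3,4) by auto
  next
    case False
    then have "x \<in> V - D" "x \<noteq> u" using x by auto
    then obtain y where "y \<in> D" "E x y" using assms(2) by (auto simp: dominating_set_def)
    then show ?thesis
      using outside neighbors_sym[OF assms(1)] \<open>x \<in> V - D\<close> \<open>x \<noteq> u\<close> by (cases "y = v") auto
  qed
qed

definition cut_edges :: "('a \<Rightarrow> 'a \<Rightarrow> bool) \<Rightarrow> 'a set \<Rightarrow> ('a \<times> 'a) set" where
  "cut_edges E D = {(x, y). E x y \<and> (x \<in> D \<longleftrightarrow> y \<notin> D)}"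

lemma cut_edges_subset: "graph V E \<Longrightarrow> cut_edges E D \<subseteq> V \<times> V"
  by (auto simp: cut_edges_def graph_def)

lemma card_cut_edges_le: "graph V E \<Longrightarrow> card (cut_edges E D) \<le> card (V \<times> V)"
  by (intro card_mono cut_edges_subset) (simp_all add: graph_def)

text \<open>The edge v w (with w \<in> D) becomes a cut edge, and the only cut edge at v, namely v u,
stays one; no edge at u is lost since v is the only neighbour of u in D.\<close>

lemma cut_edges_exchange_psubset:
  assumes "graph V E" "v \<in> D" "w \<in> D" "E v w" "u \<notin> D"
    and outside: "neighbors V E v - D \<subseteq> {u}"
    and unique_dominator: "\<And>z. z \<in> D - {v} \<Longrightarrow> \<not> E u z"
  shows "cut_edges E D \<subset> cut_edges E (insert u (D - {v}))"
proof -
  have sym: "\<And>x y. E x y \<Longrightarrow> E y x" and inV: "\<And>x y. E x y \<Longrightarrow> y \<in> V"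
    and "v \<noteq> w" using assms(1,4) unfolding graph_def by metis+
  let ?D' = "insert u (D - {v})"
  have kept: "a \<in> ?D' \<longleftrightarrow> b \<notin> ?D'" if "a \<in> D" "b \<notin> D" "E a b" for a b
  proof (cases "a = v")
    case True
    then have "b \<in> neighbors V E v - D" using that inV by (simp add: neighbors_def)
    then have "b = u" using outside by blast
    then show ?thesis using True assms(2,5) by auto
  next
    case False
    then have "b \<noteq> u" using unique_dominator that sym by blast
    then show ?thesis using that False by auto
  qed
  have "cut_edges E D \<subseteq> cut_edges E ?D'"
  proof
    fix p assume "p \<in> cut_edges E D"
    then obtain x y where p: "p = (x, y)" "E x y" "x \<in> D \<longleftrightarrow> y \<notin> D"
      by (auto simp: cut_edges_def)
    then have "x \<in> ?D' \<longleftrightarrow> y \<notin> ?D'"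
      using kept[of x y] kept[of y x] sym by (cases "x \<in> D") auto
    then show "p \<in> cut_edges E ?D'" using p by (simp add: cut_edges_def)
  qed
  moreover have "(v, w) \<notin> cut_edges E D" "(v, w) \<in> cut_edges E ?D'"
    using assms(2-5) \<open>v \<noteq> w\<close> by (auto simp: cut_edges_def)
  ultimately show ?thesis by blast
qed

lemma gamma_set_max_cut_edges_exists:
  assumes "graph V E"
  shows "\<exists>D. gamma_set V E D \<and>
    (\<forall>D'. gamma_set V E D' \<longrightarrow> card (cut_edges E D') \<le> card (cut_edges E D))"
proof -
  obtain D0 where "gamma_set V E D0" using gamma_set_exists[OF assms] by blast
  moreover have "\<forall>D. gamma_set V E D \<longrightarrow> card (cut_edges E D) < Suc (card (V \<times> V))"
    using card_cut_edges_le[OF assms] by (simp add: less_Suc_eq_le)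
  ultimately show ?thesis by (rule Lattices_Big.ex_has_greatest_nat)
qed

lemma max_cut_gamma_set_two_outside_neighbors:
  assumes g: "graph V E" and md: "min_degree V E \<ge> 2" and gD: "gamma_set V E D"
    and max: "\<And>D'. gamma_set V E D' \<Longrightarrow> card (cut_edges E D') \<le> card (cut_edges E D)"
    and vD: "v \<in> D"
  shows "card (neighbors V E v - D) \<ge> 2"
proof (rule ccontr)
  let ?N = "neighbors V E v"
  assume "\<not> ?thesis"
  then have few: "card (?N - D) \<le> 1" by simp
  have domD: "dominating_set V E D" using gD by (simp add: gamma_set_def)
  have finV: "finite V" using g by (simp add: graph_def)
  have DV: "D \<subseteq> V" using domD by (simp add: dominating_set_def)
  have "card ?N \<ge> 2" using degree_ge_min_degree[OF g, of v] vD DV md by auto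
  with few have "?N - D \<noteq> ?N" by auto
  then obtain w where "w \<in> D" "E v w" by (auto simp: neighbors_def)
  moreover have "\<not> E v v" using g unfolding graph_def by blast
  ultimately have wD: "w \<in> D - {v}" by auto
  show False
  proof (cases "\<forall>x \<in> ?N - D. \<exists>z \<in> D - {v}. E x z")
    case True
    then show False
      using dominating_set_remove[OF g domD wD \<open>E v w\<close>] gamma_set_remove_not_dominating[OF g gD vD]
      by blast
  next
    case False
    then obtain u where uN: "u \<in> ?N - D" and unique_dominator: "\<And>z. z \<in> D - {v} \<Longrightarrow> \<not> E u z"
      by blast
    have "finite (?N - D)" using finV by (simp add: neighbors_def)
    then have outside: "?N - D \<subseteq> {u}" using few uN by (auto simp: card_le_Suc0_iff_eq)
    have uV: "u \<in> V" "u \<notin> D" using uN by (auto simp: neighbors_def)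
    let ?D' = "insert u (D - {v})"
    have "finite D" using DV finV finite_subset by blast
    then have "card ?D' = card D"
      using vD uV(2) by (metis DiffD1 card_Suc_Diff1 card_insert_disjoint finite_Diff)
    then have "gamma_set V E ?D'"
      using dominating_set_exchange[OF g domD wD \<open>E v w\<close> uV(1) outside] gD
      by (simp add: gamma_set_def)
    moreover have "cut_edges E D \<subset> cut_edges E ?D'"
      using cut_edges_exchange_psubset[OF g vD _ \<open>E v w\<close> uV(2) outside unique_dominator] wD by blast
    moreover have "finite (cut_edges E ?D')"
      using finite_subset[OF cut_edges_subset[OF g]] finV by blast
    ultimately show False using max psubset_card_mono by (metis not_le)
  qed
qed

lemma certified_domination_number_eq:
  assumes g: "graph V E" and "gamma_set V E D" "certified_dominating_set V E D"
  shows "domination_number V E = certified_domination_number V E"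
proof -
  have sub: "{C. certified_dominating_set V E C} \<subseteq> {C. dominating_set V E C}"
    by (auto simp: certified_dominating_set_def)
  then have fin: "finite {C. certified_dominating_set V E C}"
    using finite_dominating_sets[OF g] finite_subset by blast
  have "certified_domination_number V E \<le> card D"
    unfolding certified_domination_number_def using fin assms(3) by (intro Min_le) auto
  then have "certified_domination_number V E \<le> domination_number V E"
    using assms(2) by (simp add: gamma_set_def)
  moreover have "certified_domination_number V E \<in> card ` {C. certified_dominating_set V E C}"
    unfolding certified_domination_number_def using fin assms(3) by (intro Min_in) auto
  then have "domination_number V E \<le> certified_domination_number V E"
    using domination_number_le[OF g] sub by auto
  ultimately show ?thesis by simp
qed

theorem corollary2p3:
  fixes V :: "'a set" and E :: "'a \<Rightarrow> 'a \<Rightarrow> bool"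
  assumes "graph V E" and "V \<noteq> {}" and "min_degree V E \<ge> 2"
  shows "(\<exists>D. gamma_set V E D \<and> (\<forall>v \<in> D. card (neighbors V E v - D) \<ge> 2))
       \<and> domination_number V E = certified_domination_number V E"
proof -
  obtain D where gD: "gamma_set V E D"
    and max: "\<And>D'. gamma_set V E D' \<Longrightarrow> card (cut_edges E D') \<le> card (cut_edges E D)"
    using gamma_set_max_cut_edges_exists[OF assms(1)] by blast
  have two: "\<forall>v \<in> D. card (neighbors V E v - D) \<ge> 2"
    using max_cut_gamma_set_two_outside_neighbors[OF assms(1,3) gD max] by blast
  have "certified_dominating_set V E D"
    using gD two by (auto simp: certified_dominating_set_def gamma_set_def)
  then show ?thesis using gD two certified_domination_number_eq[OF assms(1) gD] by blast
qed

end
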